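(* Let $s,t,k$ be non-negative integers with $t \le A(s,2k-2,k)$. For every family $\mathscr{F}$ of $t$ graphs, each having $n$ vertices and being $p$-almost equitably $k$-colorable, \[ \mathscr{U}(\mathscr{F}) ~\le~ s\left\lceil \frac{n-p}{k}\right\rceil + tp . \]
   Context: All graphs are finite and simple. A graph $U$ is an induced-universal graph for a family $\mathscr{F}$ if every graph of $\mathscr{F}$ is isomorphic to an induced subgraph of $U$; $\mathscr{U}(\mathscr{F})$ is the smallest number of vertices of such a $U$. A $k$-coloring is equitable if its $k$ color classes (stable sets) have sizes pairwise differing by at most one; a graph $G$ is $p$-almost equitably $k$-colorable if there is a set $X$ of at most $p$ vertices such that $G\setminus X$ has an equitable $k$-coloring. $A(n,d,w)$ denotes the maximum number of binary words of length $n$ and Hamming weight $w$ that are pairwise at Hamming distance at least $d$; equivalently $A(n,2k-2,k)$ is the maximum number of pairwise edge-disjoint copies of $K_k$ in $K_n$. *)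

theory Defs
  imports Complex_Main
begin

definition simple_graph :: "'a set \<Rightarrow> 'a set set \<Rightarrow> bool" where
  "simple_graph V E \<longleftrightarrow> finite V \<and> (\<forall>e\<in>E. e \<subseteq> V \<and> card e = 2)"

definition induced_embedding ::
  "'a set \<Rightarrow> 'a set set \<Rightarrow> 'b set \<Rightarrow> 'b set set \<Rightarrow> ('a \<Rightarrow> 'b) \<Rightarrow> bool" where
  "induced_embedding V E W F f \<longleftrightarrow>
     inj_on f V \<and> f ` V \<subseteq> W \<and>
     (\<forall>x\<in>V. \<forall>y\<in>V. {x, y} \<in> E \<longleftrightarrow> {f x, f y} \<in> F)"

definition induced_universal ::
  "'b set \<Rightarrow> 'b set set \<Rightarrow> (nat \<Rightarrow> 'a set \<times> 'a set set) \<Rightarrow> nat \<Rightarrow> bool" where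
  "induced_universal W F Gs t \<longleftrightarrow> simple_graph W F \<and>
     (\<forall>i<t. \<exists>f. induced_embedding (fst (Gs i)) (snd (Gs i)) W F f)"

definition univ_num :: "(nat \<Rightarrow> 'a set \<times> 'a set set) \<Rightarrow> nat \<Rightarrow> nat" where
  "univ_num Gs t = (LEAST m. \<exists>F. induced_universal {0..<m} F Gs t)"

definition equitably_colorable :: "'a set \<Rightarrow> 'a set set \<Rightarrow> nat \<Rightarrow> bool" where
  "equitably_colorable V E k \<longleftrightarrow> (\<exists>c :: 'a \<Rightarrow> nat.
     c ` V \<subseteq> {..<k} \<and>
     (\<forall>x\<in>V. \<forall>y\<in>V. {x, y} \<in> E \<longrightarrow> c x \<noteq> c y) \<and>
     (\<forall>i<k. \<forall>j<k. card {v\<in>V. c v = i} \<le> card {v\<in>V. c v = j} + 1))"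

definition almost_equitably_colorable :: "nat \<Rightarrow> 'a set \<Rightarrow> 'a set set \<Rightarrow> nat \<Rightarrow> bool" where
  "almost_equitably_colorable p V E k \<longleftrightarrow> (\<exists>X. X \<subseteq> V \<and> card X \<le> p \<and>
     equitably_colorable (V - X) {e\<in>E. e \<subseteq> V - X} k)"

definition hamming_weight :: "bool list \<Rightarrow> nat" where
  "hamming_weight x = length (filter id x)"

definition hamming_dist :: "bool list \<Rightarrow> bool list \<Rightarrow> nat" where
  "hamming_dist x y = card {i. i < length x \<and> x ! i \<noteq> y ! i}"

definition const_weight_code :: "nat \<Rightarrow> nat \<Rightarrow> nat \<Rightarrow> bool list set \<Rightarrow> bool" where
  "const_weight_code n d w C \<longleftrightarrow>
     (\<forall>x\<in>C. length x = n \<and> hamming_weight x = w) \<and>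
     (\<forall>x\<in>C. \<forall>y\<in>C. x \<noteq> y \<longrightarrow> d \<le> hamming_dist x y)"

definition A_code :: "nat \<Rightarrow> nat \<Rightarrow> nat \<Rightarrow> nat" where
  "A_code n d w = Max (card ` {C. const_weight_code n d w C})"

end

(*
  A constant-weight code word of length s and weight k is a k-set of blocks among s, and
  Hamming distance at least 2k - 2 means that two code words share at most one block.
  Take t such k-sets S_i. The universal graph has s shared blocks of m = ceil((n - p) / k)
  vertices and a private set of p vertices for each graph. Graph i puts the colour classes
  of an equitable k-colouring of all but at most p of its vertices into the blocks of S_i,
  one class per block; as the classes are balanced, truncating them to m vertices still
  leaves at most p vertices for the private set. All edges are copied into the universal
  graph. A copied edge of graph j with both ends among the vertices of graph i lies in
  blocks common to S_i and S_j, hence in one block, hence inside a colour class of graph j,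
  which is impossible: so each graph is an induced subgraph.
*)
theory Submission
  imports Defs
begin

definition word_support :: "bool list \<Rightarrow> nat set" where
  "word_support x = {i. i < length x \<and> x ! i}"

lemma finite_word_support [simp]: "finite (word_support x)"
  by (simp add: word_support_def)

lemma word_support_subset: "word_support x \<subseteq> {..<length x}"
  by (auto simp: word_support_def)

lemma card_word_support: "card (word_support x) = hamming_weight x"
  by (simp add: word_support_def hamming_weight_def length_filter_conv_card)

lemma hamming_dist_eq_card_Diff:
  assumes "length x = length y"
  shows "hamming_dist x y = card (word_support x - word_support y) + card (word_support y - word_support x)"
proof -
  have "{i. i < length x \<and> x ! i \<noteq> y ! i} =
      (word_support x - word_support y) \<union> (word_support y - word_support x)"
    using assms by (auto simp: word_support_def)
  then show ?thesis
    unfolding hamming_dist_def by (simp add: card_Un_disjoint Diff_Int_distrib2)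
qed

lemma card_Int_word_support_le_1:
  assumes "length x = length y" "hamming_weight x = k" "hamming_weight y = k"
    and "2 * k - 2 \<le> hamming_dist x y"
  shows "card (word_support x \<inter> word_support y) \<le> 1"
proof -
  let ?I = "card (word_support x \<inter> word_support y)"
  have "hamming_dist x y = (k - ?I) + (k - ?I)"
    using assms(1-3) card_Diff_subset_Int[of "word_support x" "word_support y"]
      card_Diff_subset_Int[of "word_support y" "word_support x"]
    by (simp add: hamming_dist_eq_card_Diff card_word_support Int_commute)
  moreover have "?I \<le> k"
    using assms(2) card_mono[of "word_support x"] by (simp add: card_word_support)
  ultimately show ?thesis
    using assms(4) by linarith
qed

lemma A_code_attained: "\<exists>C. const_weight_code n d w C \<and> card C = A_code n d w"
proof -
  have "{C. const_weight_code n d w C} \<subseteq> Pow {x. length x = n}"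
    by (auto simp: const_weight_code_def)
  then have "finite {C. const_weight_code n d w C}"
    using finite_lists_length_eq[of "UNIV :: bool set" n] by (simp add: finite_subset)
  moreover have "const_weight_code n d w {}"
    by (simp add: const_weight_code_def)
  ultimately have "A_code n d w \<in> card ` {C. const_weight_code n d w C}"
    unfolding A_code_def by (intro Max_in) auto
  then show ?thesis
    by auto
qed

lemma k_sets_pairwise_meeting_at_most_once_of_A_code:
  assumes "t \<le> A_code s (2 * k - 2) k"
  obtains S :: "nat \<Rightarrow> nat set"
  where "\<And>i. i < t \<Longrightarrow> S i \<subseteq> {..<s}" and "\<And>i. i < t \<Longrightarrow> card (S i) = k"
    and "\<And>i j. i < t \<Longrightarrow> j < t \<Longrightarrow> i \<noteq> j \<Longrightarrow> card (S i \<inter> S j) \<le> 1"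
proof -
  obtain C where code: "const_weight_code s (2 * k - 2) k C" and "t \<le> card C"
    using A_code_attained assms by metis
  then obtain w where w: "w ` {..<t} \<subseteq> C" "inj_on w {..<t}"
    using card_le_inj[of "{..<t}" C] card.infinite by fastforce
  have word: "length (w i) = s" "hamming_weight (w i) = k" if "i < t" for i
    using code w that by (auto simp: const_weight_code_def)
  show thesis
  proof
    show "word_support (w i) \<subseteq> {..<s}" if "i < t" for i
      using word_support_subset word(1)[OF that] by metis
    show "card (word_support (w i)) = k" if "i < t" for i
      using word(2)[OF that] by (simp add: card_word_support)
    show "card (word_support (w i) \<inter> word_support (w j)) \<le> 1"
      if "i < t" "j < t" "i \<noteq> j" for i j
    proof (rule card_Int_word_support_le_1)
      show "2 * k - 2 \<le> hamming_dist (w i) (w j)"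
        using code w that unfolding const_weight_code_def inj_on_def by blast
    qed (use word that in auto)
  qed
qed

lemma min_sum_le_sum_min_of_balanced:
  fixes z :: "nat \<Rightarrow> nat"
  assumes "\<And>i j. i < k \<Longrightarrow> j < k \<Longrightarrow> z i \<le> z j + 1"
  shows "min (\<Sum>j<k. z j) (k * m) \<le> (\<Sum>j<k. min (z j) m)"
proof (cases "\<exists>j0<k. z j0 < m")
  case True
  then have "min (z j) m = z j" if "j < k" for j
    using assms that by fastforce
  then show ?thesis
    by simp
next
  case False
  then have "min (z j) m = m" if "j < k" for j
    using that by force
  then show ?thesis
    by simp
qed

lemma equitable_coloring_truncated_classes:
  assumes "finite U" "equitably_colorable U E k"
  obtains Y and c :: "'a \<Rightarrow> nat"
  where "Y \<subseteq> U" "min (card U) (k * m) \<le> card Y" "c ` Y \<subseteq> {..<k}"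
    and "\<And>x y. x \<in> Y \<Longrightarrow> y \<in> Y \<Longrightarrow> {x, y} \<in> E \<Longrightarrow> c x \<noteq> c y"
    and "\<And>j. card {v \<in> Y. c v = j} \<le> m"
proof -
  obtain c :: "'a \<Rightarrow> nat" where c_range: "c ` U \<subseteq> {..<k}"
    and proper: "\<forall>x\<in>U. \<forall>y\<in>U. {x, y} \<in> E \<longrightarrow> c x \<noteq> c y"
    and balanced: "\<forall>i<k. \<forall>j<k. card {v \<in> U. c v = i} \<le> card {v \<in> U. c v = j} + 1"
    using assms(2) unfolding equitably_colorable_def by blast
  define Z where "Z j = {v \<in> U. c v = j}" for j
  have "\<forall>j. \<exists>Z'. Z' \<subseteq> Z j \<and> card Z' = min (card (Z j)) m"
    by (meson min.cobounded1 obtain_subset_with_card_n)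
  then obtain Z' where Z'_sub: "\<And>j. Z' j \<subseteq> Z j" and card_Z': "\<And>j. card (Z' j) = min (card (Z j)) m"
    by metis
  have finite_Z: "finite (Z j)" for j
    using assms(1) by (simp add: Z_def)
  have disjoint: "Z i \<inter> Z j = {}" if "i \<noteq> j" for i j
    using that by (auto simp: Z_def)
  define Y where "Y = (\<Union>j<k. Z' j)"
  have "Y \<subseteq> U"
    using Z'_sub by (auto simp: Y_def Z_def)
  have "card U = (\<Sum>j<k. card (Z j))"
  proof -
    have "U = (\<Union>j<k. Z j)"
      using c_range by (auto simp: Z_def)
    then show ?thesis
      using finite_Z disjoint by (simp add: card_UN_disjoint)
  qed
  moreover have "card Y = (\<Sum>j<k. min (card (Z j)) m)"
    unfolding Y_def using Z'_sub finite_Z card_Z' disjoint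
    by (subst card_UN_disjoint) (auto intro: finite_subset, blast)
  ultimately have "min (card U) (k * m) \<le> card Y"
    using min_sum_le_sum_min_of_balanced[of k "\<lambda>j. card (Z j)" m] balanced by (simp add: Z_def)
  show thesis
  proof (rule that)
    show "Y \<subseteq> U" "min (card U) (k * m) \<le> card Y"
      by fact+
    show "c ` Y \<subseteq> {..<k}"
      using \<open>Y \<subseteq> U\<close> c_range by blast
    show "c x \<noteq> c y" if "x \<in> Y" "y \<in> Y" "{x, y} \<in> E" for x y
      using proper \<open>Y \<subseteq> U\<close> that by blast
    show "card {v \<in> Y. c v = j} \<le> m" for j
    proof -
      have "{v \<in> Y. c v = j} \<subseteq> Z' j"
        using Z'_sub by (auto simp: Y_def Z_def)
      then show ?thesis
        using card_mono[OF finite_subset] card_Z' finite_Z Z'_sub by (metis min.bounded_iff)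
    qed
  qed
qed

lemma almost_equitable_coloring_with_small_classes:
  assumes "finite V" "almost_equitably_colorable p V E k" "card V \<le> k * m + p"
  obtains X and c :: "'a \<Rightarrow> nat"
  where "X \<subseteq> V" "card X \<le> p" "c ` (V - X) \<subseteq> {..<k}"
    and "\<And>x y. x \<in> V - X \<Longrightarrow> y \<in> V - X \<Longrightarrow> {x, y} \<in> E \<Longrightarrow> c x \<noteq> c y"
    and "\<And>j. card {v \<in> V - X. c v = j} \<le> m"
proof -
  obtain X0 where X0: "X0 \<subseteq> V" "card X0 \<le> p"
    and equitable: "equitably_colorable (V - X0) {e \<in> E. e \<subseteq> V - X0} k"
    using assms(2) unfolding almost_equitably_colorable_def by blast
  obtain Y and c :: "'a \<Rightarrow> nat" where Y: "Y \<subseteq> V - X0" "min (card (V - X0)) (k * m) \<le> card Y"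
    and c_range: "c ` Y \<subseteq> {..<k}"
    and proper: "\<And>x y. x \<in> Y \<Longrightarrow> y \<in> Y \<Longrightarrow> {x, y} \<in> {e \<in> E. e \<subseteq> V - X0} \<Longrightarrow> c x \<noteq> c y"
    and small: "\<And>j. card {v \<in> Y. c v = j} \<le> m"
    using equitable_coloring_truncated_classes[OF finite_Diff[OF assms(1)] equitable] by blast
  have "Y \<subseteq> V"
    using Y(1) by blast
  then have "card (V - X0) = card V - card X0" "card (V - Y) = card V - card Y" "card Y \<le> card V"
    using X0(1) assms(1) by (auto simp: card_Diff_subset finite_subset card_mono)
  show thesis
  proof (rule that[of "V - Y" c])
    show "card (V - Y) \<le> p"
      using Y(2) X0(2) assms(3) \<open>card (V - X0) = _\<close> \<open>card (V - Y) = _\<close> \<open>card Y \<le> _\<close>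
      by (simp add: min_def split: if_splits)
    show "c x \<noteq> c y" if "x \<in> V - (V - Y)" "y \<in> V - (V - Y)" "{x, y} \<in> E" for x y
      using proper Y(1) that by blast
  qed (use \<open>Y \<subseteq> V\<close> c_range small in \<open>auto simp: Diff_Diff_Int Int_absorb1\<close>)
qed

lemma almost_equitably_colorable_card_bound:
  assumes "finite V" "almost_equitably_colorable p V E k"
  shows "card V \<le> k * nat \<lceil>real (card V - p) / real k\<rceil> + p"
proof (cases "k = 0")
  case True
  \<comment> \<open>Here the ceiling is 0 (division by zero); a 0-colouring forces all of V into X.\<close>
  obtain X where "X \<subseteq> V" "card X \<le> p" "equitably_colorable (V - X) {e \<in> E. e \<subseteq> V - X} 0"
    using assms(2) True unfolding almost_equitably_colorable_def by blast
  then have "V - X = {}"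
    unfolding equitably_colorable_def by auto
  then have "V = X"
    using \<open>X \<subseteq> V\<close> by blast
  then show ?thesis
    using \<open>card X \<le> p\<close> by simp
next
  case False
  have "real (card V - p) = real k * (real (card V - p) / real k)"
    using False by simp
  also have "\<dots> \<le> real k * real (nat \<lceil>real (card V - p) / real k\<rceil>)"
    by (intro mult_left_mono) linarith+
  finally have "real (card V - p) \<le> real k * real (nat \<lceil>real (card V - p) / real k\<rceil>)" .
  then have "card V - p \<le> k * nat \<lceil>real (card V - p) / real k\<rceil>"
    by (metis of_nat_le_iff of_nat_mult)
  then show ?thesis
    by linarith
qed

lemma inj_into_blocks:
  assumes "finite V" "X \<subseteq> V" "finite P" "card X \<le> card P" "inj_on b (c ` (V - X))"
    and "\<And>j. card {v \<in> V - X. c v = j} \<le> m"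
  obtains f :: "'a \<Rightarrow> ('b \<times> nat) + 'c"
  where "inj_on f V" "\<And>x. x \<in> V - X \<Longrightarrow> \<exists>r<m. f x = Inl (b (c x), r)" "f ` X \<subseteq> Inr ` P"
proof -
  obtain g where g: "g ` X \<subseteq> P" "inj_on g X"
    using card_le_inj assms(1-4) finite_subset by metis
  have "\<forall>j. \<exists>h. h ` {v \<in> V - X. c v = j} \<subseteq> {..<m} \<and> inj_on h {v \<in> V - X. c v = j}"
    by (intro allI card_le_inj) (use assms(1,6) in auto)
  then obtain h where h_range: "\<And>j. h j ` {v \<in> V - X. c v = j} \<subseteq> {..<m}"
    and h_inj: "\<And>j. inj_on (h j) {v \<in> V - X. c v = j}"
    by metis
  define f where "f x = (if x \<in> X then Inr (g x) else Inl (b (c x), h (c x) x))" for x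
  show thesis
  proof
    show "inj_on f V"
    proof (rule inj_onI)
      fix x y assume xy: "x \<in> V" "y \<in> V" "f x = f y"
      show "x = y"
      proof (cases "x \<in> X")
        case True
        then have "y \<in> X" "g x = g y"
          using xy by (auto simp: f_def split: if_splits)
        then show ?thesis
          using True g(2) by (auto dest: inj_onD)
      next
        case False
        then have "y \<notin> X" "b (c x) = b (c y)" "h (c x) x = h (c y) y"
          using xy by (auto simp: f_def split: if_splits)
        moreover from this have "c x = c y"
          using False xy assms(5) by (auto dest: inj_onD)
        ultimately show ?thesis
          using False xy h_inj[of "c x"] by (auto dest: inj_onD)
      qed
    qed
    show "\<exists>r<m. f x = Inl (b (c x), r)" if "x \<in> V - X" for x
      using that h_range by (auto simp: f_def)
    show "f ` X \<subseteq> Inr ` P"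
      using g(1) by (auto simp: f_def)
  qed
qed

definition block_embedding ::
  "'a set \<Rightarrow> 'a set set \<Rightarrow> 'b set \<Rightarrow> nat \<Rightarrow> 'c set \<Rightarrow> ('a \<Rightarrow> ('b \<times> nat) + 'c) \<Rightarrow> bool" where
  "block_embedding V E S m P f \<longleftrightarrow> inj_on f V \<and> f ` V \<subseteq> (S \<times> {..<m}) <+> P \<and>
     (\<forall>x\<in>V. \<forall>y\<in>V. \<forall>a r r'. f x = Inl (a, r) \<longrightarrow> f y = Inl (a, r') \<longrightarrow> {x, y} \<notin> E)"

lemma block_embedding_exists:
  fixes V :: "'a set" and S :: "'b set" and P :: "'c set"
  assumes "finite V" "almost_equitably_colorable p V E k" "card V \<le> k * m + p"
    and "finite S" "card S = k" "finite P" "card P = p"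
  shows "\<exists>f :: 'a \<Rightarrow> ('b \<times> nat) + 'c. block_embedding V E S m P f"
proof -
  obtain X and c :: "'a \<Rightarrow> nat" where X: "X \<subseteq> V" "card X \<le> p" and c_range: "c ` (V - X) \<subseteq> {..<k}"
    and proper: "\<And>x y. x \<in> V - X \<Longrightarrow> y \<in> V - X \<Longrightarrow> {x, y} \<in> E \<Longrightarrow> c x \<noteq> c y"
    and small: "\<And>j. card {v \<in> V - X. c v = j} \<le> m"
    using almost_equitable_coloring_with_small_classes[OF assms(1-3)] by blast
  obtain b where b: "bij_betw b {..<k} S"
    using ex_bij_betw_nat_finite[OF assms(4)] unfolding assms(5) atLeast0LessThan by blast
  have b_inj: "inj_on b (c ` (V - X))"
    using inj_on_subset[OF bij_betw_imp_inj_on[OF b] c_range] .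
  obtain f :: "'a \<Rightarrow> ('b \<times> nat) + 'c" where f_inj: "inj_on f V"
    and f_kept: "\<And>x. x \<in> V - X \<Longrightarrow> \<exists>r<m. f x = Inl (b (c x), r)" and f_X: "f ` X \<subseteq> Inr ` P"
    using inj_into_blocks[OF assms(1) X(1) assms(6) _ b_inj small] X(2) assms(7) by auto
  have "f x \<in> (S \<times> {..<m}) <+> P" if x: "x \<in> V" for x
  proof (cases "x \<in> X")
    case True
    then show ?thesis
      using f_X by auto
  next
    case False
    then obtain r where "r < m" "f x = Inl (b (c x), r)"
      using f_kept x by blast
    moreover have "b (c x) \<in> S"
      using c_range b False x by (auto dest: bij_betwE)
    ultimately show ?thesis
      by auto
  qed
  then have "f ` V \<subseteq> (S \<times> {..<m}) <+> P"
    by blast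
  moreover have "{x, y} \<notin> E" if "x \<in> V" "y \<in> V" "f x = Inl (a, r)" "f y = Inl (a, r')" for x y a r r'
  proof -
    have "x \<in> V - X" "y \<in> V - X"
      using that f_X by auto
    moreover have "b (c x) = b (c y)"
      using f_kept[of x] f_kept[of y] that calculation by force
    ultimately have "c x = c y"
      using b_inj by (meson imageI inj_onD)
    then show ?thesis
      using proper[of x y] \<open>x \<in> V - X\<close> \<open>y \<in> V - X\<close> by blast
  qed
  ultimately have "block_embedding V E S m P f"
    using f_inj unfolding block_embedding_def by (intro conjI) auto
  then show ?thesis
    by blast
qed

lemma block_embeddings_overlap_in_one_block:
  assumes "block_embedding V E S m P f" "block_embedding V' E' S' m P' f'"
    and "finite S" "card (S \<inter> S') \<le> 1" "P \<inter> P' = {}"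
    and "x \<in> V'" "y \<in> V'" "f' x \<in> f ` V" "f' y \<in> f ` V"
  shows "{x, y} \<notin> E'"
proof -
  have ranges: "f ` V \<subseteq> (S \<times> {..<m}) <+> P" "f' ` V' \<subseteq> (S' \<times> {..<m}) <+> P'"
    using assms(1,2) unfolding block_embedding_def by simp_all
  have shared_block: "\<exists>a r. a \<in> S \<inter> S' \<and> f' z = Inl (a, r)" if "z \<in> V'" "f' z \<in> f ` V" for z
  proof -
    have "f' z \<in> (S \<times> {..<m}) <+> P" "f' z \<in> (S' \<times> {..<m}) <+> P'"
      using ranges that by auto
    then show ?thesis
      using assms(5) by (cases "f' z") auto
  qed
  obtain a r where "a \<in> S \<inter> S'" "f' x = Inl (a, r)"
    using shared_block assms(6,8) by blast
  moreover obtain b r' where "b \<in> S \<inter> S'" "f' y = Inl (b, r')"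
    using shared_block assms(7,9) by blast
  moreover have "a = b"
    using calculation assms(3,4) card_le_Suc0_iff_eq[of "S \<inter> S'"] by auto
  ultimately show ?thesis
    using assms(2,6,7) unfolding block_embedding_def by blast
qed

lemma simple_graph_edge:
  assumes "simple_graph V E" "e \<in> E"
  shows "\<exists>x y. e = {x, y} \<and> x \<noteq> y \<and> x \<in> V \<and> y \<in> V"
  using assms unfolding simple_graph_def by (metis card_2_iff insert_subset)

lemma simple_graph_union_of_images:
  fixes Gs :: "nat \<Rightarrow> 'a set \<times> 'a set set" and f :: "nat \<Rightarrow> 'a \<Rightarrow> 'b"
  assumes "finite W"
    and graphs: "\<And>i. i < t \<Longrightarrow> simple_graph (fst (Gs i)) (snd (Gs i))"
    and inj: "\<And>i. i < t \<Longrightarrow> inj_on (f i) (fst (Gs i))"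
    and range: "\<And>i. i < t \<Longrightarrow> f i ` fst (Gs i) \<subseteq> W"
  shows "simple_graph W {f i ` e | i e. i < t \<and> e \<in> snd (Gs i)}"
  unfolding simple_graph_def
proof (intro conjI ballI)
  fix e' assume "e' \<in> {f i ` e | i e. i < t \<and> e \<in> snd (Gs i)}"
  then obtain i x y where "i < t" "e' = {f i x, f i y}" "x \<noteq> y" "x \<in> fst (Gs i)" "y \<in> fst (Gs i)"
    using simple_graph_edge[OF graphs] by blast
  moreover have "f i x \<noteq> f i y"
    using inj_onD[OF inj] calculation by metis
  ultimately show "e' \<subseteq> W" "card e' = 2"
    using range by auto
qed (fact \<open>finite W\<close>)

lemma induced_embedding_into_union_of_images:
  fixes Gs :: "nat \<Rightarrow> 'a set \<times> 'a set set" and f :: "nat \<Rightarrow> 'a \<Rightarrow> 'b"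
  assumes graphs: "\<And>i. i < t \<Longrightarrow> simple_graph (fst (Gs i)) (snd (Gs i))"
    and inj: "inj_on (f i) (fst (Gs i))" and range: "f i ` fst (Gs i) \<subseteq> W" and i: "i < t"
    and separated: "\<And>j x y. j < t \<Longrightarrow> i \<noteq> j \<Longrightarrow> x \<in> fst (Gs j) \<Longrightarrow> y \<in> fst (Gs j) \<Longrightarrow>
      f j x \<in> f i ` fst (Gs i) \<Longrightarrow> f j y \<in> f i ` fst (Gs i) \<Longrightarrow> {x, y} \<notin> snd (Gs j)"
  shows "induced_embedding (fst (Gs i)) (snd (Gs i)) W {f i ` e | i e. i < t \<and> e \<in> snd (Gs i)} (f i)"
  unfolding induced_embedding_def
proof (intro conjI ballI iffI)
  let ?F = "{f i ` e | i e. i < t \<and> e \<in> snd (Gs i)}"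
  show "inj_on (f i) (fst (Gs i))" "f i ` fst (Gs i) \<subseteq> W"
    by (fact inj range)+
  fix x y assume xy: "x \<in> fst (Gs i)" "y \<in> fst (Gs i)"
  show "{f i x, f i y} \<in> ?F" if "{x, y} \<in> snd (Gs i)"
  proof -
    have "{f i x, f i y} = f i ` {x, y}"
      by simp
    then show ?thesis
      using i that by blast
  qed
  assume "{f i x, f i y} \<in> ?F"
  then obtain j e where "j < t" "e \<in> snd (Gs j)" "{f i x, f i y} = f j ` e"
    by blast
  then obtain x' y' where j: "j < t" "{x', y'} \<in> snd (Gs j)" "x' \<in> fst (Gs j)" "y' \<in> fst (Gs j)"
    and image: "{f i x, f i y} = {f j x', f j y'}"
    using simple_graph_edge[OF graphs] by force
  show "{x, y} \<in> snd (Gs i)"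
  proof (cases "j = i")
    case True
    then have "{x, y} = {x', y'}"
      using image inj_on_image_eq_iff[OF inj, of "{x, y}" "{x', y'}"] xy j by auto
    then show ?thesis
      using j True by simp
  next
    case False
    have "f j x' \<in> {f i x, f i y}" "f j y' \<in> {f i x, f i y}"
      unfolding image by simp_all
    then have "f j x' \<in> f i ` fst (Gs i)" "f j y' \<in> f i ` fst (Gs i)"
      using xy by auto
    then have "{x', y'} \<notin> snd (Gs j)"
      using separated False j(1,3,4) by metis
    then show ?thesis
      using j(2) by contradiction
  qed
qed

lemma induced_universal_union_of_images:
  fixes Gs :: "nat \<Rightarrow> 'a set \<times> 'a set set" and f :: "nat \<Rightarrow> 'a \<Rightarrow> 'b"
  assumes "finite W"
    and graphs: "\<And>i. i < t \<Longrightarrow> simple_graph (fst (Gs i)) (snd (Gs i))"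
    and inj: "\<And>i. i < t \<Longrightarrow> inj_on (f i) (fst (Gs i))"
    and range: "\<And>i. i < t \<Longrightarrow> f i ` fst (Gs i) \<subseteq> W"
    and separated: "\<And>i j x y. i < t \<Longrightarrow> j < t \<Longrightarrow> i \<noteq> j \<Longrightarrow> x \<in> fst (Gs j) \<Longrightarrow> y \<in> fst (Gs j) \<Longrightarrow>
      f j x \<in> f i ` fst (Gs i) \<Longrightarrow> f j y \<in> f i ` fst (Gs i) \<Longrightarrow> {x, y} \<notin> snd (Gs j)"
  shows "induced_universal W {f i ` e | i e. i < t \<and> e \<in> snd (Gs i)} Gs t"
  unfolding induced_universal_def
proof (intro conjI allI impI exI)
  show "simple_graph W {f i ` e | i e. i < t \<and> e \<in> snd (Gs i)}"
    by (rule simple_graph_union_of_images[OF assms(1-4)])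
  show "induced_embedding (fst (Gs i)) (snd (Gs i)) W {f i ` e | i e. i < t \<and> e \<in> snd (Gs i)} (f i)"
    if "i < t" for i
    by (rule induced_embedding_into_union_of_images[where Gs = Gs and t = t and W = W and f = f,
          OF graphs inj[OF that] range[OF that] that separated[OF that]])
qed

lemma induced_embedding_image:
  assumes emb: "induced_embedding V E W F f" and h: "inj_on h W"
    and edges_in_W: "\<And>e. e \<in> F \<Longrightarrow> e \<subseteq> W"
  shows "induced_embedding V E (h ` W) ((`) h ` F) (h \<circ> f)"
proof -
  have f: "inj_on f V" "f ` V \<subseteq> W"
    using emb unfolding induced_embedding_def by auto
  have "{h (f x), h (f y)} \<in> (`) h ` F \<longleftrightarrow> {f x, f y} \<in> F" if "x \<in> V" "y \<in> V" for x y
  proof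
    have pair_in_W: "{f x, f y} \<subseteq> W"
      using f(2) that by auto
    assume "{h (f x), h (f y)} \<in> (`) h ` F"
    then obtain e where "e \<in> F" "h ` e = h ` {f x, f y}"
      by auto
    moreover from this have "e = {f x, f y}"
      using inj_on_image_eq_iff[OF h edges_in_W pair_in_W] by blast
    ultimately show "{f x, f y} \<in> F"
      by simp
  next
    assume "{f x, f y} \<in> F"
    then show "{h (f x), h (f y)} \<in> (`) h ` F"
      by (metis image_empty image_insert imageI)
  qed
  moreover have "inj_on (h \<circ> f) V"
    using f comp_inj_on inj_on_subset[OF h] by blast
  moreover have "(h \<circ> f) ` V \<subseteq> h ` W"
    using f(2) by auto
  ultimately show ?thesis
    using emb unfolding induced_embedding_def by simp
qed

lemma univ_num_le_card:
  fixes W :: "'b set" and Gs :: "nat \<Rightarrow> 'a set \<times> 'a set set"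
  assumes "induced_universal W F Gs t"
  shows "univ_num Gs t \<le> card W"
proof -
  have "finite W"
    using assms unfolding induced_universal_def simple_graph_def by blast
  then obtain h where h: "bij_betw h W {0..<card W}"
    using ex_bij_betw_finite_nat by blast
  have h_inj: "inj_on h W" and h_image: "h ` W = {0..<card W}"
    using h by (auto simp: bij_betw_def)
  have edges_in_W: "e \<subseteq> W" if "e \<in> F" for e
    using assms that unfolding induced_universal_def simple_graph_def by blast
  have "simple_graph {0..<card W} ((`) h ` F)"
    using assms edges_in_W h_inj h_image
    unfolding induced_universal_def simple_graph_def by (auto simp: card_image inj_on_subset)
  moreover have "induced_embedding V E {0..<card W} ((`) h ` F) (h \<circ> f)"
    if "induced_embedding V E W F f" for V E and f :: "'a \<Rightarrow> 'b"
    using induced_embedding_image[OF that h_inj edges_in_W] h_image by simp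
  ultimately have "induced_universal {0..<card W} ((`) h ` F) Gs t"
    using assms unfolding induced_universal_def by blast
  then show ?thesis
    unfolding univ_num_def by (rule Least_le[OF exI])
qed

lemma induced_universal_of_block_embeddings:
  fixes S :: "nat \<Rightarrow> nat set" and s m p :: nat
  assumes graphs: "\<And>i. i < t \<Longrightarrow> simple_graph (fst (Gs i)) (snd (Gs i))"
    and S: "\<And>i. i < t \<Longrightarrow> S i \<subseteq> {..<s}"
    and S_meet: "\<And>i j. i < t \<Longrightarrow> j < t \<Longrightarrow> i \<noteq> j \<Longrightarrow> card (S i \<inter> S j) \<le> 1"
    and f: "\<And>i. i < t \<Longrightarrow> block_embedding (fst (Gs i)) (snd (Gs i)) (S i) m ({i} \<times> {..<p}) (f i)"
  shows "induced_universal (({..<s} \<times> {..<m}) <+> ({..<t} \<times> {..<p}))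
    {f i ` e | i e. i < t \<and> e \<in> snd (Gs i)} Gs t"
proof (rule induced_universal_union_of_images)
  show "finite (({..<s} \<times> {..<m}) <+> ({..<t} \<times> {..<p}))"
    by simp
  show "simple_graph (fst (Gs i)) (snd (Gs i))" if "i < t" for i
    using graphs that .
  show "inj_on (f i) (fst (Gs i))" if "i < t" for i
    using f that unfolding block_embedding_def by auto
  show "f i ` fst (Gs i) \<subseteq> ({..<s} \<times> {..<m}) <+> ({..<t} \<times> {..<p})" if "i < t" for i
  proof -
    have "(S i \<times> {..<m}) <+> ({i} \<times> {..<p}) \<subseteq> ({..<s} \<times> {..<m}) <+> ({..<t} \<times> {..<p})"
      using S[OF that] that by auto
    then show ?thesis
      using f[OF that] unfolding block_embedding_def by (meson order_trans)
  qed
  show "{x, y} \<notin> snd (Gs j)"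
    if ij: "i < t" "j < t" "i \<noteq> j" and "x \<in> fst (Gs j)" "y \<in> fst (Gs j)"
      and "f j x \<in> f i ` fst (Gs i)" "f j y \<in> f i ` fst (Gs i)" for i j x y
  proof (rule block_embeddings_overlap_in_one_block[OF f[OF ij(1)] f[OF ij(2)]])
    show "finite (S i)"
      using S[OF ij(1)] finite_subset by blast
    show "card (S i \<inter> S j) \<le> 1"
      using S_meet ij .
    show "{i} \<times> {..<p} \<inter> {j} \<times> {..<p} = {}"
      using ij(3) by blast
  qed (use that in simp_all)
qed

theorem theorem3:
  fixes s t k n p :: nat
    and Gs :: "nat \<Rightarrow> 'a set \<times> 'a set set"
  assumes "t \<le> A_code s (2 * k - 2) k"
    and "\<forall>i<t. simple_graph (fst (Gs i)) (snd (Gs i))"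
    and "\<forall>i<t. card (fst (Gs i)) = n"
    and "\<forall>i<t. almost_equitably_colorable p (fst (Gs i)) (snd (Gs i)) k"
  shows "int (univ_num Gs t) \<le> int s * \<lceil>real (n - p) / real k\<rceil> + int (t * p)"
proof -
  obtain S where S: "\<And>i. i < t \<Longrightarrow> S i \<subseteq> {..<s}" "\<And>i. i < t \<Longrightarrow> card (S i) = k"
    and S_meet: "\<And>i j. i < t \<Longrightarrow> j < t \<Longrightarrow> i \<noteq> j \<Longrightarrow> card (S i \<inter> S j) \<le> 1"
    using k_sets_pairwise_meeting_at_most_once_of_A_code[OF assms(1)] by blast
  define m where "m = nat \<lceil>real (n - p) / real k\<rceil>"
  have "\<exists>f. block_embedding (fst (Gs i)) (snd (Gs i)) (S i) m ({i} \<times> {..<p}) f" if i: "i < t" for i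
  proof (rule block_embedding_exists)
    show finite_V: "finite (fst (Gs i))"
      using assms(2) i unfolding simple_graph_def by blast
    show "card (fst (Gs i)) \<le> k * m + p"
      using almost_equitably_colorable_card_bound[OF finite_V assms(4)[rule_format, OF i]]
        assms(3) i by (simp add: m_def)
    show "finite (S i)"
      using S(1)[OF i] finite_subset by blast
  qed (use assms(4) i S(2) in \<open>auto simp: card_cartesian_product\<close>)
  then obtain f where f: "\<And>i. i < t \<Longrightarrow> block_embedding (fst (Gs i)) (snd (Gs i)) (S i) m ({i} \<times> {..<p}) (f i)"
    by metis
  have graphs: "\<And>i. i < t \<Longrightarrow> simple_graph (fst (Gs i)) (snd (Gs i))"
    using assms(2) by blast
  have "univ_num Gs t \<le> card (({..<s} \<times> {..<m}) <+> ({..<t} \<times> {..<p}))"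
    using univ_num_le_card[OF induced_universal_of_block_embeddings[OF graphs S(1) S_meet f]] .
  then have "univ_num Gs t \<le> s * m + t * p"
    by (simp add: card_Plus card_cartesian_product)
  moreover have "int m = \<lceil>real (n - p) / real k\<rceil>"
    unfolding m_def by (rule nat_0_le) (simp add: zero_le_ceiling less_le_trans[of "-1" 0])
  ultimately show ?thesis
    by (metis of_nat_add of_nat_le_iff of_nat_mult)
qed

end
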